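(* Let $\mathcal{X},\mathcal{Y},\mathcal{Z}$ be sets, $\mathcal{G}$ a measurable space of maps $\mathcal{X}\to\mathcal{Z}$, $\mathcal{H}$ a set of maps $\mathcal{Z}\to\mathbb{R}$, and let the loss $\ell(\cdot,y)$ be convex in its first argument for every $y$. Fix arbitrary datasets $\mathcal{S}_t=((x_{t,1},y_{t,1}),\dots,(x_{t,m_t},y_{t,m_t}))$, $t=1,\dots,T$. Assume that for every $t$ and $g\in\mathcal{G}$, $0\le\hat L_t(g)\le C$ and $\mathcal{R}_t(g)\le\beta(g,m_t)$. Then the predictions $\hat y_{t,i}$ of the Integrated EWA-LL algorithm with prior $\pi_1$ and parameter $\eta>0$ satisfy $$\frac1T\sum_{t=1}^T\frac1{m_t}\sum_{i=1}^{m_t}\ell(\hat y_{t,i},y_{t,i})\le\inf_\rho\Bigg\{\mathbb{E}_{g\sim\rho}\Bigg[\frac1T\sum_{t=1}^T\inf_{h_t\in\mathcal{H}}\frac1{m_t}\sum_{i=1}^{m_t}\ell\big(h_t\circ g(x_{t,i}),y_{t,i}\big)+\frac1T\sum_{t=1}^T\beta(g,m_t)\Bigg]+\frac{\eta C^2}{8}+\frac{\mathcal{K}(\rho,\pi_1)}{\eta T}\Bigg\},$$ the infimum being over all probability measures $\rho$ on $\mathcal{G}$, with $\mathcal{K}$ the Kullback–Leibler divergence.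
   Context: Within-task algorithm: for each task $t$ and each $g\in\mathcal{G}$, an online algorithm processes $\mathcal{S}_t$ sequentially, producing at step $i$ a real prediction $\hat y^g_{t,i}$ depending only on $g$, $x_{t,1},\dots,x_{t,i}$, $y_{t,1},\dots,y_{t,i-1}$. Let $\hat L_t(g)=\frac1{m_t}\sum_{i=1}^{m_t}\ell(\hat y^g_{t,i},y_{t,i})$ and $\mathcal{R}_t(g)=\hat L_t(g)-\inf_{h\in\mathcal{H}}\frac1{m_t}\sum_{i=1}^{m_t}\ell(h\circ g(x_{t,i}),y_{t,i})$ (all maps assumed measurable/integrable in $g$). Integrated EWA-LL: given a prior probability $\pi_1$ on $\mathcal{G}$ and $\eta>0$, for $t=1,\dots,T$: run the within-task algorithm on $\mathcal{S}_t$ for every $g\in\mathcal{G}$ and predict $\hat y_{t,i}=\int\hat y^g_{t,i}\,\pi_t(\mathrm{d}g)$; then set $\pi_{t+1}(\mathrm{d}g)=\exp(-\eta\hat L_t(g))\pi_t(\mathrm{d}g)/\int\exp(-\eta\hat L_t(\gamma))\pi_t(\mathrm{d}\gamma)$. *)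

theory Defs
  imports "HOL-Probability.Probability"
begin

text \<open>Kullback-Leibler divergence K(rho, pi) = int log (d rho / d pi) d rho, valued in
  [0, infinity]; it is infinite when rho is not absolutely continuous w.r.t. pi or when
  the log-density is not rho-integrable (the library's KL_divergence is real-valued and
  only meaningful in the finite case).\<close>
definition KL_div :: "'a measure \<Rightarrow> 'a measure \<Rightarrow> ereal" where
  "KL_div \<rho> \<pi> =
     (if sets \<rho> = sets \<pi> \<and> absolutely_continuous \<pi> \<rho>
         \<and> integrable \<rho> (entropy_density (exp 1) \<pi> \<rho>)
      then ereal (KL_divergence (exp 1) \<pi> \<rho>) else \<infinity>)"

definition within_pred ::
  "(('x \<Rightarrow> 'z) \<Rightarrow> 'x list \<Rightarrow> 'y list \<Rightarrow> real) \<Rightarrow> (nat \<Rightarrow> nat \<Rightarrow> 'x) \<Rightarrow> (nat \<Rightarrow> nat \<Rightarrow> 'y)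
    \<Rightarrow> ('x \<Rightarrow> 'z) \<Rightarrow> nat \<Rightarrow> nat \<Rightarrow> real" where
  "within_pred alg x y g t i = alg g (map (x t) [1..<Suc i]) (map (y t) [1..<i])"

definition Lhat ::
  "(real \<Rightarrow> 'y \<Rightarrow> real) \<Rightarrow> (('x \<Rightarrow> 'z) \<Rightarrow> 'x list \<Rightarrow> 'y list \<Rightarrow> real)
    \<Rightarrow> (nat \<Rightarrow> nat \<Rightarrow> 'x) \<Rightarrow> (nat \<Rightarrow> nat \<Rightarrow> 'y) \<Rightarrow> (nat \<Rightarrow> nat) \<Rightarrow> ('x \<Rightarrow> 'z) \<Rightarrow> nat \<Rightarrow> real" where
  "Lhat loss alg x y m g t =
     (1 / real (m t)) * (\<Sum>i=1..m t. loss (within_pred alg x y g t i) (y t i))"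

definition best_in_H ::
  "(real \<Rightarrow> 'y \<Rightarrow> real) \<Rightarrow> ('z \<Rightarrow> real) set
    \<Rightarrow> (nat \<Rightarrow> nat \<Rightarrow> 'x) \<Rightarrow> (nat \<Rightarrow> nat \<Rightarrow> 'y) \<Rightarrow> (nat \<Rightarrow> nat) \<Rightarrow> ('x \<Rightarrow> 'z) \<Rightarrow> nat \<Rightarrow> ereal" where
  "best_in_H loss H x y m g t =
     (INF h\<in>H. ereal ((1 / real (m t)) * (\<Sum>i=1..m t. loss ((h \<circ> g) (x t i)) (y t i))))"

definition regret ::
  "(real \<Rightarrow> 'y \<Rightarrow> real) \<Rightarrow> (('x \<Rightarrow> 'z) \<Rightarrow> 'x list \<Rightarrow> 'y list \<Rightarrow> real) \<Rightarrow> ('z \<Rightarrow> real) set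
    \<Rightarrow> (nat \<Rightarrow> nat \<Rightarrow> 'x) \<Rightarrow> (nat \<Rightarrow> nat \<Rightarrow> 'y) \<Rightarrow> (nat \<Rightarrow> nat) \<Rightarrow> ('x \<Rightarrow> 'z) \<Rightarrow> nat \<Rightarrow> ereal" where
  "regret loss alg H x y m g t = ereal (Lhat loss alg x y m g t) - best_in_H loss H x y m g t"

definition ewa_update :: "'g measure \<Rightarrow> real \<Rightarrow> ('g \<Rightarrow> real) \<Rightarrow> 'g measure" where
  "ewa_update \<pi> \<eta> L =
     density \<pi> (\<lambda>g. ennreal (exp (- \<eta> * L g) / (\<integral>\<gamma>. exp (- \<eta> * L \<gamma>) \<partial>\<pi>)))"

text \<open>The sequence of priors pi_t (t = 1, 2, ...) of Integrated EWA-LL; index 0 unused.\<close>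
fun ewa_prior :: "'g measure \<Rightarrow> real \<Rightarrow> (nat \<Rightarrow> 'g \<Rightarrow> real) \<Rightarrow> nat \<Rightarrow> 'g measure" where
  "ewa_prior \<pi>1 \<eta> L 0 = \<pi>1"
| "ewa_prior \<pi>1 \<eta> L (Suc 0) = \<pi>1"
| "ewa_prior \<pi>1 \<eta> L (Suc (Suc t)) =
     ewa_update (ewa_prior \<pi>1 \<eta> L (Suc t)) \<eta> (L (Suc t))"

definition ewa_ll_pred ::
  "(real \<Rightarrow> 'y \<Rightarrow> real) \<Rightarrow> (('x \<Rightarrow> 'z) \<Rightarrow> 'x list \<Rightarrow> 'y list \<Rightarrow> real) \<Rightarrow> ('x \<Rightarrow> 'z) measure
    \<Rightarrow> real \<Rightarrow> (nat \<Rightarrow> nat \<Rightarrow> 'x) \<Rightarrow> (nat \<Rightarrow> nat \<Rightarrow> 'y) \<Rightarrow> (nat \<Rightarrow> nat) \<Rightarrow> nat \<Rightarrow> nat \<Rightarrow> real" where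
  "ewa_ll_pred loss alg \<pi>1 \<eta> x y m t i =
     (\<integral>g. within_pred alg x y g t i
        \<partial>(ewa_prior \<pi>1 \<eta> (\<lambda>s g. Lhat loss alg x y m g s) t))"

end

theory Submission
  imports Defs
begin

text \<open>The EWA posterior \<open>\<pi>\<^sub>t\<close> is the Gibbs measure with density
  \<open>exp (-\<eta> (L\<^sub>1 + \<dots> + L\<^sub>t\<^sub>-\<^sub>1)) / Z\<^sub>t\<close> with respect to \<open>\<pi>\<^sub>1\<close>. Hoeffding's lemma bounds
  \<open>ln (Z\<^sub>t\<^sub>+\<^sub>1 / Z\<^sub>t)\<close> by \<open>-\<eta> E\<^sub>\<pi>\<^sub>t L\<^sub>t + \<eta>\<^sup>2 C\<^sup>2 / 8\<close>; telescoping, and the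
  Donsker-Varadhan inequality \<open>ln Z\<^sub>T\<^sub>+\<^sub>1 \<ge> -\<eta> E\<^sub>\<rho> (L\<^sub>1 + \<dots> + L\<^sub>T) - K(\<rho>, \<pi>\<^sub>1)\<close>,
  bound the cumulative posterior-mean loss. By convexity (Jensen) the loss of the mixture
  prediction is at most the posterior mean of \<open>L\<^sub>t\<close>, and the within-task regret bound
  replaces \<open>L\<^sub>t(g)\<close> by the best loss in \<open>H\<close> plus \<open>\<beta>(g, m\<^sub>t)\<close>.\<close>

lemma (in prob_space) jensens_inequality_sum:
  fixes q :: "'i \<Rightarrow> real \<Rightarrow> real" and p :: "'i \<Rightarrow> 'a \<Rightarrow> real"
  assumes "finite I" and convex: "\<And>i. i \<in> I \<Longrightarrow> convex_on UNIV (q i)"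
    and p_int: "\<And>i. i \<in> I \<Longrightarrow> integrable M (p i)" and F_int: "integrable M F"
    and F_eq: "\<And>g. g \<in> space M \<Longrightarrow> (\<Sum>i\<in>I. q i (p i g)) = F g"
  shows "(\<Sum>i\<in>I. q i (\<integral>g. p i g \<partial>M)) \<le> (\<integral>g. F g \<partial>M)"
proof -
  define c where "c i = (\<integral>g. p i g \<partial>M)" for i
  define k where "k i = Inf ((\<lambda>t. (q i (c i) - q i t) / (c i - t)) ` ({c i<..} \<inter> UNIV))" for i
  \<comment> \<open>\<open>k i\<close> is the slope of a supporting line of \<open>q i\<close> at \<open>c i\<close>; individual terms
      \<open>q i (p i g)\<close> need not be integrable, only their sum.\<close>
  have support: "q i (c i) + k i * (z - c i) \<le> q i z" if "i \<in> I" for i z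
    unfolding k_def by (rule convex_le_Inf_differential[OF convex[OF that]]) auto
  have "(\<Sum>i\<in>I. q i (c i)) = (\<Sum>i\<in>I. \<integral>g. q i (c i) + k i * (p i g - c i) \<partial>M)"
  proof (rule sum.cong[OF refl])
    fix i assume "i \<in> I"
    then show "q i (c i) = (\<integral>g. q i (c i) + k i * (p i g - c i) \<partial>M)"
      using p_int prob_space by (simp add: c_def)
  qed
  also have "\<dots> = (\<integral>g. (\<Sum>i\<in>I. q i (c i) + k i * (p i g - c i)) \<partial>M)"
    using p_int by (intro Bochner_Integration.integral_sum[symmetric]) auto
  also have "\<dots> \<le> (\<integral>g. F g \<partial>M)"
  proof (rule integral_mono)
    show "integrable M (\<lambda>g. \<Sum>i\<in>I. q i (c i) + k i * (p i g - c i))"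
      using p_int by (intro Bochner_Integration.integrable_sum) auto
    fix g assume "g \<in> space M"
    have "(\<Sum>i\<in>I. q i (c i) + k i * (p i g - c i)) \<le> (\<Sum>i\<in>I. q i (p i g))"
      by (intro sum_mono support)
    also have "\<dots> = F g" by (rule F_eq) fact
    finally show "(\<Sum>i\<in>I. q i (c i) + k i * (p i g - c i)) \<le> F g" .
  qed fact
  finally show ?thesis by (simp add: c_def)
qed

lemma (in prob_space) Donsker_Varadhan_inequality:
  fixes h :: "'a \<Rightarrow> real"
  assumes "prob_space \<rho>" and sets: "sets \<rho> = sets M" and ac: "absolutely_continuous M \<rho>"
    and ent_int: "integrable \<rho> (entropy_density (exp 1) M \<rho>)"
    and [measurable]: "h \<in> borel_measurable M" and h_bound: "\<And>g. g \<in> space M \<Longrightarrow> \<bar>h g\<bar> \<le> B"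
  shows "(\<integral>g. h g \<partial>\<rho>) - KL_divergence (exp 1) M \<rho> \<le> ln (\<integral>g. exp (h g) \<partial>M)"
proof -
  interpret R: prob_space \<rho> by fact
  have "finite_measure \<rho>" by unfold_locales
  then obtain D where [measurable]: "D \<in> borel_measurable M"
    and D_RN: "AE g in M. RN_deriv M \<rho> g = ennreal (D g)" and D_nonneg: "\<And>g. 0 \<le> D g"
    using real_RN_deriv[OF _ ac sets] by blast
  have "\<rho> = density M (RN_deriv M \<rho>)" using density_RN_deriv[OF ac sets] by simp
  also have "\<dots> = density M D" using D_RN by (intro density_cong) auto
  finally have \<rho>_eq: "\<rho> = density M D" .
  have ent_eq: "AE g in \<rho>. entropy_density (exp 1) M \<rho> g = ln (D g)"
    using absolutely_continuous_AE[OF sets ac D_RN]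
    by eventually_elim (simp add: entropy_density_def log_def D_nonneg)
  have lnD_int: "integrable \<rho> (\<lambda>g. ln (D g))"
    using integrable_cong_AE[THEN iffD1, OF _ _ ent_eq ent_int]
    by (simp add: measurable_cong_sets[OF sets refl])
  have KL_eq: "KL_divergence (exp 1) M \<rho> = (\<integral>g. ln (D g) \<partial>\<rho>)"
    unfolding KL_divergence_def using ent_eq
    by (intro integral_cong_AE) (auto simp: measurable_cong_sets[OF sets refl])
  have h_int: "integrable \<rho> h"
    by (rule R.integrable_const_bound[where B=B])
       (auto simp: h_bound sets_eq_imp_space_eq[OF sets] measurable_cong_sets[OF sets refl])
  have exp_int: "integrable M (\<lambda>g. exp (h g))"
    by (rule integrable_const_bound[where B="exp B"]) (auto intro!: abs_le_D1 h_bound)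
  define Z where "Z = (\<integral>g. exp (h g) \<partial>M)"
  have Z_pos: "Z > 0"
    unfolding Z_def using integral_less_AE_space[of "\<lambda>_. 0" "\<lambda>g. exp (h g)"] exp_int emeasure_space_1
    by simp
  define F where "F g = h g - ln (D g) - ln Z" for g
  have [measurable]: "F \<in> borel_measurable M" unfolding F_def by measurable
  have "integrable \<rho> F" unfolding F_def using h_int lnD_int by auto
  then have F_int: "integrable M (\<lambda>g. D g * F g)"
    using integrable_real_density[of D M F] D_nonneg \<rho>_eq by simp
  have D_int: "integrable M D"
    using R.integrable_const[of "1::real"] integrable_real_density[of D M "\<lambda>_. 1"] D_nonneg \<rho>_eq
    by simp
  have D_1: "(\<integral>g. D g \<partial>M) = 1"
    using R.prob_space integral_real_density[of D M "\<lambda>_. 1"] D_nonneg \<rho>_eq by simp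
  \<comment> \<open>Gibbs' variational argument: \<open>D F = D ln (e\<^sup>h / (D Z)) \<le> e\<^sup>h / Z - D\<close> by \<open>ln u \<le> u - 1\<close>.\<close>
  have pointwise: "D g * F g \<le> exp (h g) / Z - D g" for g
  proof (cases "D g = 0")
    case False
    then have D_pos: "D g > 0" using D_nonneg[of g] by simp
    have "F g = ln (exp (h g) / (D g * Z))"
      unfolding F_def using D_pos Z_pos by (simp add: ln_div ln_mult)
    also have "\<dots> \<le> exp (h g) / (D g * Z) - 1"
      using D_pos Z_pos by (intro ln_le_minus_one) auto
    finally have "D g * F g \<le> D g * (exp (h g) / (D g * Z) - 1)"
      using D_pos by (intro mult_left_mono) auto
    also have "\<dots> = exp (h g) / Z - D g" using D_pos by (simp add: field_simps)
    finally show ?thesis .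
  qed (use Z_pos in simp)
  have "(\<integral>g. F g \<partial>\<rho>) = (\<integral>g. D g * F g \<partial>M)"
    using integral_real_density[of D M F] D_nonneg \<rho>_eq by simp
  also have "\<dots> \<le> (\<integral>g. exp (h g) / Z - D g \<partial>M)"
    by (intro integral_mono F_int Bochner_Integration.integrable_diff D_int integrable_divide exp_int pointwise)
  also have "\<dots> = 0" using D_int exp_int D_1 Z_pos by (simp add: Z_def)
  also have "(\<integral>g. F g \<partial>\<rho>) = (\<integral>g. h g \<partial>\<rho>) - KL_divergence (exp 1) M \<rho> - ln Z"
    unfolding F_def KL_eq using h_int lnD_int R.prob_space by simp
  finally show ?thesis by (simp add: Z_def)
qed

lemma loss_of_mixture_prediction_le:
  assumes "prob_space P" and convex: "\<And>yy. convex_on UNIV (\<lambda>p. loss p yy)" and "m t > 0"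
    and "\<And>i. i \<in> {1..m t} \<Longrightarrow> integrable P (\<lambda>g. within_pred alg x y g t i)"
    and "integrable P (\<lambda>g. Lhat loss alg x y m g t)"
  shows "(1 / real (m t)) * (\<Sum>i=1..m t. loss (\<integral>g. within_pred alg x y g t i \<partial>P) (y t i))
         \<le> (\<integral>g. Lhat loss alg x y m g t \<partial>P)"
proof -
  have "(\<Sum>i=1..m t. loss (\<integral>g. within_pred alg x y g t i \<partial>P) (y t i))
        \<le> (\<integral>g. real (m t) * Lhat loss alg x y m g t \<partial>P)"
  proof (rule prob_space.jensens_inequality_sum[where q="\<lambda>i p. loss p (y t i)"])
    show "(\<Sum>i=1..m t. loss (within_pred alg x y g t i) (y t i)) = real (m t) * Lhat loss alg x y m g t"
      for g using \<open>m t > 0\<close> by (simp add: Lhat_def)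
  qed (use assms in auto)
  then show ?thesis using \<open>m t > 0\<close> by (simp add: field_simps)
qed

lemma average_Lhat_le_comparator:
  assumes "\<And>t. t \<in> {1..T} \<Longrightarrow> regret loss alg H x y m g t \<le> ereal (\<beta> g (m t))"
  shows "ereal ((1 / real T) * (\<Sum>t=1..T. Lhat loss alg x y m g t))
         \<le> ereal (1 / real T) * (\<Sum>t=1..T. best_in_H loss H x y m g t)
           + ereal ((1 / real T) * (\<Sum>t=1..T. \<beta> g (m t)))"
proof -
  have task_le: "ereal (Lhat loss alg x y m g t) \<le> best_in_H loss H x y m g t + ereal (\<beta> g (m t))"
    if "t \<in> {1..T}" for t
    using assms[OF that] by (cases "best_in_H loss H x y m g t") (auto simp: regret_def)
  have "ereal (\<Sum>t=1..T. Lhat loss alg x y m g t) = (\<Sum>t=1..T. ereal (Lhat loss alg x y m g t))"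
    by simp
  also have "\<dots> \<le> (\<Sum>t=1..T. best_in_H loss H x y m g t + ereal (\<beta> g (m t)))"
    by (intro sum_mono task_le)
  also have "\<dots> = (\<Sum>t=1..T. best_in_H loss H x y m g t) + ereal (\<Sum>t=1..T. \<beta> g (m t))"
    by (simp add: sum.distrib)
  finally have "ereal (\<Sum>t=1..T. Lhat loss alg x y m g t)
      \<le> (\<Sum>t=1..T. best_in_H loss H x y m g t) + ereal (\<Sum>t=1..T. \<beta> g (m t))" .
  then have "ereal (1 / real T) * ereal (\<Sum>t=1..T. Lhat loss alg x y m g t)
      \<le> ereal (1 / real T) * ((\<Sum>t=1..T. best_in_H loss H x y m g t) + ereal (\<Sum>t=1..T. \<beta> g (m t)))"
    by (rule ereal_mult_left_mono) simp
  then show ?thesis by (subst (asm) ereal_pos_distrib) auto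
qed

lemma integral_le_nn_integral_e2ennreal:
  fixes f :: "'a \<Rightarrow> real" and B :: "'a \<Rightarrow> ereal"
  assumes "integrable \<rho> f" "\<And>g. g \<in> space \<rho> \<Longrightarrow> 0 \<le> f g"
    and le_B: "\<And>g. g \<in> space \<rho> \<Longrightarrow> ereal (f g) \<le> B g"
  shows "ereal (\<integral>g. f g \<partial>\<rho>) \<le> enn2ereal (\<integral>\<^sup>+g. e2ennreal (B g) \<partial>\<rho>)"
proof -
  have "ennreal (\<integral>g. f g \<partial>\<rho>) = (\<integral>\<^sup>+g. ennreal (f g) \<partial>\<rho>)"
    using assms by (intro nn_integral_eq_integral[symmetric]) auto
  also have "\<dots> \<le> (\<integral>\<^sup>+g. e2ennreal (B g) \<partial>\<rho>)"
    by (intro nn_integral_mono) (metis e2ennreal_ereal e2ennreal_mono le_B)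
  finally show ?thesis
    using assms by (subst (asm) less_eq_ennreal.rep_eq) (simp add: enn2ereal_ennreal integral_nonneg)
qed

definition ewa_weight :: "real \<Rightarrow> (nat \<Rightarrow> 'a \<Rightarrow> real) \<Rightarrow> nat \<Rightarrow> 'a \<Rightarrow> real" where
  "ewa_weight \<eta> L t g = exp (- \<eta> * (\<Sum>s\<in>{1..<t}. L s g))"

definition ewa_partition :: "'a measure \<Rightarrow> real \<Rightarrow> (nat \<Rightarrow> 'a \<Rightarrow> real) \<Rightarrow> nat \<Rightarrow> real" where
  "ewa_partition M \<eta> L t = (\<integral>g. ewa_weight \<eta> L t g \<partial>M)"

lemma ewa_weight_Suc: "1 \<le> t \<Longrightarrow> ewa_weight \<eta> L (Suc t) g = ewa_weight \<eta> L t g * exp (- \<eta> * L t g)"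
  unfolding ewa_weight_def by (simp add: exp_add[symmetric] algebra_simps)

lemma ewa_prior_Suc:
  "1 \<le> t \<Longrightarrow> ewa_prior \<pi> \<eta> L (Suc t) = ewa_update (ewa_prior \<pi> \<eta> L t) \<eta> (L t)"
  by (cases t) auto

lemma sets_ewa_prior [measurable_cong]: "sets (ewa_prior \<pi> \<eta> L t) = sets \<pi>"
  by (induction \<pi> \<eta> L t rule: ewa_prior.induct) (simp_all add: ewa_update_def)

lemma space_ewa_prior: "space (ewa_prior \<pi> \<eta> L t) = space \<pi>"
  using sets_eq_imp_space_eq[OF sets_ewa_prior] .

locale exponential_weights = prob_space M
  for M :: "'a measure" and \<eta> C :: real and T :: nat and L :: "nat \<Rightarrow> 'a \<Rightarrow> real" +
  assumes eta_pos: "\<eta> > 0"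
    and L_measurable: "\<And>s. s \<in> {1..T} \<Longrightarrow> L s \<in> borel_measurable M"
    and L_bounds: "\<And>s g. s \<in> {1..T} \<Longrightarrow> g \<in> space M \<Longrightarrow> 0 \<le> L s g \<and> L s g \<le> C"
begin

lemma ewa_weight_measurable [measurable]:
  assumes "t \<le> Suc T" shows "ewa_weight \<eta> L t \<in> borel_measurable M"
proof -
  have [measurable]: "(\<lambda>g. \<Sum>s\<in>{1..<t}. L s g) \<in> borel_measurable M"
    using assms L_measurable by (intro borel_measurable_sum) auto
  show ?thesis unfolding ewa_weight_def by measurable
qed

lemma ewa_weight_pos: "0 < ewa_weight \<eta> L t g"
  unfolding ewa_weight_def by simp

lemma ewa_weight_le_1: "t \<le> Suc T \<Longrightarrow> g \<in> space M \<Longrightarrow> ewa_weight \<eta> L t g \<le> 1"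
  unfolding ewa_weight_def using eta_pos L_bounds
  by (auto intro!: mult_nonneg_nonneg sum_nonneg)

lemma ewa_weight_integrable: "t \<le> Suc T \<Longrightarrow> integrable M (ewa_weight \<eta> L t)"
  by (rule integrable_const_bound[where B=1]) (auto simp: ewa_weight_le_1 abs_of_pos ewa_weight_pos)

lemma ewa_partition_pos: "t \<le> Suc T \<Longrightarrow> 0 < ewa_partition M \<eta> L t"
  unfolding ewa_partition_def
  using integral_less_AE_space[of "\<lambda>_. 0" "ewa_weight \<eta> L t"] ewa_weight_integrable
    emeasure_space_1 ewa_weight_pos
  by simp

lemma ewa_partition_1: "ewa_partition M \<eta> L 1 = 1"
  unfolding ewa_partition_def ewa_weight_def by (simp add: prob_space)

lemma ewa_density_nonneg: "t \<le> Suc T \<Longrightarrow> 0 \<le> ewa_weight \<eta> L t g / ewa_partition M \<eta> L t"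
  using ewa_weight_pos ewa_partition_pos by (auto intro: less_imp_le)

lemma ewa_prior_eq_density:
  "1 \<le> t \<Longrightarrow> t \<le> Suc T \<Longrightarrow>
   ewa_prior M \<eta> L t = density M (\<lambda>g. ennreal (ewa_weight \<eta> L t g / ewa_partition M \<eta> L t))"
proof (induction t rule: nat_induct_at_least)
  case base
  show ?case using ewa_partition_1 by (simp add: ewa_weight_def density_1)
next
  case (Suc t)
  let ?W = "ewa_weight \<eta> L" and ?Z = "ewa_partition M \<eta> L"
  have t: "t \<in> {1..T}" "t \<le> Suc T" using Suc by auto
  note [measurable] = L_measurable[OF t(1)] ewa_weight_measurable[OF t(2)]
    ewa_weight_measurable[OF Suc.prems]
  have Z_pos: "?Z t > 0" "?Z (Suc t) > 0" using ewa_partition_pos Suc by auto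
  define N where "N = (\<integral>g. exp (- \<eta> * L t g) \<partial>ewa_prior M \<eta> L t)"
  have N_eq: "N = ?Z (Suc t) / ?Z t"
    unfolding N_def using Suc t ewa_density_nonneg
    by (simp add: integral_real_density ewa_partition_def ewa_weight_Suc)
  have "ewa_prior M \<eta> L (Suc t)
      = density (density M (\<lambda>g. ennreal (?W t g / ?Z t))) (\<lambda>g. ennreal (exp (- \<eta> * L t g) / N))"
    unfolding ewa_prior_Suc[OF Suc.hyps(1)] ewa_update_def N_def Suc.IH[OF t(2)] by (rule refl)
  also have "\<dots> = density M (\<lambda>g. ennreal (?W t g / ?Z t) * ennreal (exp (- \<eta> * L t g) / N))"
    by (intro density_density_eq) auto
  also have "\<dots> = density M (\<lambda>g. ennreal (?W (Suc t) g / ?Z (Suc t)))"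
  proof (intro density_cong AE_I2)
    fix g
    have "?W t g / ?Z t * (exp (- \<eta> * L t g) / N) = ?W (Suc t) g / ?Z (Suc t)"
      using Z_pos Suc.hyps by (simp add: N_eq ewa_weight_Suc field_simps)
    then show "ennreal (?W t g / ?Z t) * ennreal (exp (- \<eta> * L t g) / N)
             = ennreal (?W (Suc t) g / ?Z (Suc t))"
      using Z_pos ewa_weight_pos[of t g] N_eq by (subst ennreal_mult[symmetric]) auto
  qed measurable
  finally show ?case .
qed

lemma integral_ewa_prior:
  fixes f :: "'a \<Rightarrow> real"
  assumes "1 \<le> t" "t \<le> Suc T" and [measurable]: "f \<in> borel_measurable M"
  shows "(\<integral>g. f g \<partial>ewa_prior M \<eta> L t) = (\<integral>g. ewa_weight \<eta> L t g / ewa_partition M \<eta> L t * f g \<partial>M)"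
  unfolding ewa_prior_eq_density[OF assms(1,2)]
  using ewa_weight_measurable[OF assms(2)] ewa_density_nonneg[OF assms(2)]
  by (subst integral_real_density) auto

lemma integrable_ewa_prior:
  fixes f :: "'a \<Rightarrow> real"
  assumes "1 \<le> t" "t \<le> Suc T" and f: "integrable M f"
  shows "integrable (ewa_prior M \<eta> L t) f"
proof -
  note [measurable] = borel_measurable_integrable[OF f] ewa_weight_measurable[OF assms(2)]
  have Z_pos: "ewa_partition M \<eta> L t > 0" using ewa_partition_pos assms by auto
  have "integrable M (\<lambda>g. ewa_weight \<eta> L t g / ewa_partition M \<eta> L t * f g)"
  proof (rule Bochner_Integration.integrable_bound[of _ "\<lambda>g. f g / ewa_partition M \<eta> L t"])
    show "AE g in M. norm (ewa_weight \<eta> L t g / ewa_partition M \<eta> L t * f g)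
                     \<le> norm (f g / ewa_partition M \<eta> L t)"
    proof (intro AE_I2)
      fix g assume "g \<in> space M"
      then have "\<bar>ewa_weight \<eta> L t g\<bar> * \<bar>f g\<bar> \<le> 1 * \<bar>f g\<bar>"
        using ewa_weight_le_1[OF assms(2)] ewa_weight_pos[of t g] by (intro mult_right_mono) auto
      then show "norm (ewa_weight \<eta> L t g / ewa_partition M \<eta> L t * f g)
                 \<le> norm (f g / ewa_partition M \<eta> L t)"
        using Z_pos by (simp add: abs_mult divide_right_mono)
    qed
  qed (use f in auto)
  then show ?thesis
    unfolding ewa_prior_eq_density[OF assms(1,2)] using ewa_density_nonneg[OF assms(2)]
    by (subst integrable_real_density) auto
qed

lemma prob_space_ewa_prior:
  assumes "1 \<le> t" "t \<le> Suc T"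
  shows "prob_space (ewa_prior M \<eta> L t)"
proof (rule prob_spaceI)
  note [measurable] = ewa_weight_measurable[OF assms(2)]
  have "emeasure (ewa_prior M \<eta> L t) (space (ewa_prior M \<eta> L t))
        = (\<integral>\<^sup>+g. ennreal (ewa_weight \<eta> L t g / ewa_partition M \<eta> L t) \<partial>M)"
    unfolding ewa_prior_eq_density[OF assms] by (simp add: emeasure_density)
  also have "\<dots> = ennreal (\<integral>g. ewa_weight \<eta> L t g / ewa_partition M \<eta> L t \<partial>M)"
    using ewa_weight_integrable[OF assms(2)] ewa_density_nonneg[OF assms(2)]
    by (intro nn_integral_eq_integral) auto
  also have "(\<integral>g. ewa_weight \<eta> L t g / ewa_partition M \<eta> L t \<partial>M) = 1"
    using ewa_partition_pos[OF assms(2)] by (simp add: ewa_partition_def)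
  finally show "emeasure (ewa_prior M \<eta> L t) (space (ewa_prior M \<eta> L t)) = 1" by simp
qed

lemma integrable_L_ewa_prior:
  assumes "s \<in> {1..T}" "1 \<le> t" "t \<le> Suc T"
  shows "integrable (ewa_prior M \<eta> L t) (L s)"
  using L_bounds[OF assms(1)] L_measurable[OF assms(1)]
  by (intro integrable_ewa_prior[OF assms(2,3)] integrable_const_bound[where B=C]) auto

text \<open>Hoeffding's lemma for \<open>-L\<^sub>t \<in> [-C, 0]\<close> under \<open>\<pi>\<^sub>t\<close>, whose exponential moment
  \<open>\<integral> exp (-\<eta> L\<^sub>t) d\<pi>\<^sub>t\<close> is exactly \<open>Z\<^sub>t\<^sub>+\<^sub>1 / Z\<^sub>t\<close>.\<close>
lemma ln_ewa_partition_Suc_le: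
  assumes t: "t \<in> {1..T}"
  shows "ln (ewa_partition M \<eta> L (Suc t)) - ln (ewa_partition M \<eta> L t)
         \<le> - \<eta> * (\<integral>g. L t g \<partial>ewa_prior M \<eta> L t) + \<eta>\<^sup>2 * C\<^sup>2 / 8"
proof -
  let ?P = "ewa_prior M \<eta> L t" and ?Z = "ewa_partition M \<eta> L"
  have t1: "1 \<le> t" "t \<le> Suc T" using t by auto
  interpret P: prob_space ?P by (rule prob_space_ewa_prior[OF t1])
  note [measurable] = L_measurable[OF t]
  have Z_pos: "?Z (Suc t) > 0" "?Z t > 0" using ewa_partition_pos t1 t by auto
  interpret H: interval_bounded_random_variable ?P "\<lambda>g. - L t g" "-C" 0
    by unfold_locales (use L_bounds[OF t] in \<open>auto simp: space_ewa_prior\<close>)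
  define E where "E = (\<integral>g. L t g \<partial>?P)"
  have exp_int: "integrable ?P (\<lambda>g. exp (- \<eta> * L t g))"
    by (rule P.integrable_const_bound[where B=1])
       (use L_bounds[OF t] eta_pos in \<open>auto simp: space_ewa_prior mult_nonneg_nonneg\<close>)
  have "ennreal (\<integral>g. exp (\<eta> * E) * exp (- \<eta> * L t g) \<partial>?P)
        = (\<integral>\<^sup>+g. ennreal (exp (\<eta> * E) * exp (- \<eta> * L t g)) \<partial>?P)"
    using exp_int by (intro nn_integral_eq_integral[symmetric]) auto
  also have "\<dots> = (\<integral>\<^sup>+g. ennreal (exp (\<eta> * (- L t g - (\<integral>g. - L t g \<partial>?P)))) \<partial>?P)"
    by (simp add: E_def exp_add[symmetric] algebra_simps)
  also have "\<dots> \<le> ennreal (exp (\<eta>\<^sup>2 * C\<^sup>2 / 8))"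
    using H.Hoeffdings_lemma_nn_integral[OF eta_pos] by simp
  finally have "exp (\<eta> * E) * (\<integral>g. exp (- \<eta> * L t g) \<partial>?P) \<le> exp (\<eta>\<^sup>2 * C\<^sup>2 / 8)"
    by (simp add: ennreal_le_iff)
  moreover have "(\<integral>g. exp (- \<eta> * L t g) \<partial>?P) = ?Z (Suc t) / ?Z t"
    by (subst integral_ewa_prior[OF t1]) (auto simp: ewa_partition_def ewa_weight_Suc[OF t1(1)])
  ultimately have "ln (exp (\<eta> * E) * (?Z (Suc t) / ?Z t)) \<le> \<eta>\<^sup>2 * C\<^sup>2 / 8"
    using Z_pos by (subst ln_exp[symmetric], subst ln_le_cancel_iff) auto
  with Z_pos show ?thesis by (simp add: ln_mult ln_div E_def)
qed

lemma ln_ewa_partition_le: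
  "ln (ewa_partition M \<eta> L (Suc T))
   \<le> - \<eta> * (\<Sum>t=1..T. \<integral>g. L t g \<partial>ewa_prior M \<eta> L t) + real T * (\<eta>\<^sup>2 * C\<^sup>2 / 8)"
proof -
  have "ln (ewa_partition M \<eta> L (Suc n))
        \<le> - \<eta> * (\<Sum>t=1..n. \<integral>g. L t g \<partial>ewa_prior M \<eta> L t) + real n * (\<eta>\<^sup>2 * C\<^sup>2 / 8)"
    if "n \<le> T" for n
    using that
  proof (induction n)
    case 0
    then show ?case using ewa_partition_1 by simp
  next
    case (Suc n)
    then show ?case
      using ln_ewa_partition_Suc_le[of "Suc n"] by (simp add: algebra_simps)
  qed
  then show ?thesis by simp
qed

lemma cumulative_posterior_loss_le:
  assumes "prob_space \<rho>" "sets \<rho> = sets M" "absolutely_continuous M \<rho>"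
    "integrable \<rho> (entropy_density (exp 1) M \<rho>)"
  shows "(\<Sum>t=1..T. \<integral>g. L t g \<partial>ewa_prior M \<eta> L t)
         \<le> (\<integral>g. (\<Sum>t=1..T. L t g) \<partial>\<rho>) + real T * (\<eta> * C\<^sup>2 / 8) + KL_divergence (exp 1) M \<rho> / \<eta>"
proof -
  define S where "S g = (\<Sum>t=1..T. L t g)" for g
  have [measurable]: "S \<in> borel_measurable M"
    unfolding S_def using L_measurable by (intro borel_measurable_sum) auto
  have S_bounds: "0 \<le> S g \<and> S g \<le> real T * C" if "g \<in> space M" for g
    using sum_bounded_above[of "{1..T}" "\<lambda>t. L t g" C] sum_nonneg[of "{1..T}" "\<lambda>t. L t g"]
      L_bounds that
    unfolding S_def by auto
  have "(\<integral>g. - \<eta> * S g \<partial>\<rho>) - KL_divergence (exp 1) M \<rho> \<le> ln (\<integral>g. exp (- \<eta> * S g) \<partial>M)"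
    using S_bounds eta_pos
    by (intro Donsker_Varadhan_inequality[OF assms, where B="\<eta> * (real T * C)"])
       (auto simp: abs_mult)
  also have "(\<integral>g. exp (- \<eta> * S g) \<partial>M) = ewa_partition M \<eta> L (Suc T)"
    unfolding ewa_partition_def ewa_weight_def S_def by (simp add: atLeastLessThanSuc_atLeastAtMost)
  finally have "\<eta> * (\<Sum>t=1..T. \<integral>g. L t g \<partial>ewa_prior M \<eta> L t)
      \<le> \<eta> * ((\<integral>g. S g \<partial>\<rho>) + real T * (\<eta> * C\<^sup>2 / 8) + KL_divergence (exp 1) M \<rho> / \<eta>)"
    using ln_ewa_partition_le eta_pos by (simp add: algebra_simps power2_eq_square)
  then show ?thesis using eta_pos unfolding S_def by simp
qed

lemma average_posterior_loss_le:
  assumes "T > 0" and \<rho>: "prob_space \<rho>" "sets \<rho> = sets M"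
    and le_B: "\<And>g. g \<in> space M \<Longrightarrow> ereal ((1 / real T) * (\<Sum>t=1..T. L t g)) \<le> B g"
  shows "ereal ((1 / real T) * (\<Sum>t=1..T. \<integral>g. L t g \<partial>ewa_prior M \<eta> L t))
         \<le> enn2ereal (\<integral>\<^sup>+g. e2ennreal (B g) \<partial>\<rho>) + ereal (\<eta> * C\<^sup>2 / 8)
           + KL_div \<rho> M / ereal (\<eta> * real T)"
proof (cases "absolutely_continuous M \<rho> \<and> integrable \<rho> (entropy_density (exp 1) M \<rho>)")
  case False
  then have "KL_div \<rho> M = \<infinity>" by (simp add: KL_div_def)
  then show ?thesis using eta_pos by (simp add: enn2ereal_nonneg)
next
  case True
  interpret R: prob_space \<rho> by fact
  have space_\<rho>: "space \<rho> = space M" using sets_eq_imp_space_eq[OF \<rho>(2)] .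
  have measurable_\<rho>: "f \<in> borel_measurable \<rho> \<longleftrightarrow> f \<in> borel_measurable M" for f :: "'a \<Rightarrow> real"
    using measurable_cong_sets[OF \<rho>(2) refl, of borel] by blast
  define S where "S g = (1 / real T) * (\<Sum>t=1..T. L t g)" for g
  define K where "K = KL_divergence (exp 1) M \<rho>"
  have "integrable \<rho> (L t)" if t: "t \<in> {1..T}" for t
    by (rule R.integrable_const_bound[where B=C])
       (use L_bounds[OF t] L_measurable[OF t] in \<open>auto simp: space_\<rho> measurable_\<rho>\<close>)
  then have S_int: "integrable \<rho> S"
    unfolding S_def by (intro integrable_mult_right Bochner_Integration.integrable_sum) auto
  have S_nonneg: "0 \<le> S g" if "g \<in> space \<rho>" for g
    unfolding S_def using L_bounds that space_\<rho> by (intro mult_nonneg_nonneg sum_nonneg) auto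
  have "(\<Sum>t=1..T. \<integral>g. L t g \<partial>ewa_prior M \<eta> L t)
      \<le> (\<integral>g. (\<Sum>t=1..T. L t g) \<partial>\<rho>) + real T * (\<eta> * C\<^sup>2 / 8) + K / \<eta>"
    unfolding K_def using True by (intro cumulative_posterior_loss_le[OF \<rho>]) auto
  then have "(1 / real T) * (\<Sum>t=1..T. \<integral>g. L t g \<partial>ewa_prior M \<eta> L t)
      \<le> (1 / real T) * ((\<integral>g. (\<Sum>t=1..T. L t g) \<partial>\<rho>) + real T * (\<eta> * C\<^sup>2 / 8) + K / \<eta>)"
    by (rule mult_left_mono) simp
  also have "\<dots> = (\<integral>g. S g \<partial>\<rho>) + \<eta> * C\<^sup>2 / 8 + K / (\<eta> * real T)"
    using \<open>T > 0\<close> by (simp add: S_def field_simps)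
  finally have "ereal ((1 / real T) * (\<Sum>t=1..T. \<integral>g. L t g \<partial>ewa_prior M \<eta> L t))
      \<le> ereal (\<integral>g. S g \<partial>\<rho>) + ereal (\<eta> * C\<^sup>2 / 8) + ereal (K / (\<eta> * real T))"
    by simp
  also have "\<dots> \<le> enn2ereal (\<integral>\<^sup>+g. e2ennreal (B g) \<partial>\<rho>) + ereal (\<eta> * C\<^sup>2 / 8) + ereal (K / (\<eta> * real T))"
    using S_int S_nonneg le_B[folded S_def space_\<rho>]
    by (intro add_right_mono integral_le_nn_integral_e2ennreal)
  also have "ereal (K / (\<eta> * real T)) = KL_div \<rho> M / ereal (\<eta> * real T)"
    using True \<rho>(2) eta_pos \<open>T > 0\<close> by (simp add: KL_div_def K_def)
  finally show ?thesis by simp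
qed

end

lemma ewa_ll_task_loss_le:
  assumes "exponential_weights \<pi>1 \<eta> C T (\<lambda>s g. Lhat loss alg x y m g s)"
    and "\<And>yy. convex_on UNIV (\<lambda>p. loss p yy)" and t: "t \<in> {1..T}" and "m t > 0"
    and int_pred: "\<And>i. i \<in> {1..m t} \<Longrightarrow> integrable \<pi>1 (\<lambda>g. within_pred alg x y g t i)"
  shows "(1 / real (m t)) * (\<Sum>i=1..m t. loss (ewa_ll_pred loss alg \<pi>1 \<eta> x y m t i) (y t i))
         \<le> (\<integral>g. Lhat loss alg x y m g t \<partial>ewa_prior \<pi>1 \<eta> (\<lambda>s g. Lhat loss alg x y m g s) t)"
proof -
  interpret exponential_weights \<pi>1 \<eta> C T "\<lambda>s g. Lhat loss alg x y m g s" by fact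
  let ?\<pi> = "ewa_prior \<pi>1 \<eta> (\<lambda>s g. Lhat loss alg x y m g s) t"
  have t_range: "1 \<le> t" "t \<le> Suc T" using t by auto
  have pred_int: "integrable ?\<pi> (\<lambda>g. within_pred alg x y g t i)" if "i \<in> {1..m t}" for i
    using int_pred[OF that] by (rule integrable_ewa_prior[OF t_range])
  have L_int: "integrable ?\<pi> (\<lambda>g. Lhat loss alg x y m g t)"
    by (rule integrable_L_ewa_prior[OF t t_range])
  show ?thesis
    unfolding ewa_ll_pred_def using prob_space_ewa_prior[OF t_range] assms(2,4) pred_int L_int
    by (rule loss_of_mixture_prediction_le)
qed

theorem theorem4:
  fixes G :: "('x \<Rightarrow> 'z) measure"
    and H :: "('z \<Rightarrow> real) set"
    and loss :: "real \<Rightarrow> 'y \<Rightarrow> real"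
    and alg :: "('x \<Rightarrow> 'z) \<Rightarrow> 'x list \<Rightarrow> 'y list \<Rightarrow> real"
    and T :: nat and m :: "nat \<Rightarrow> nat"
    and x :: "nat \<Rightarrow> nat \<Rightarrow> 'x" and y :: "nat \<Rightarrow> nat \<Rightarrow> 'y"
    and \<beta> :: "('x \<Rightarrow> 'z) \<Rightarrow> nat \<Rightarrow> real"
    and C \<eta> :: real
    and \<pi>1 :: "('x \<Rightarrow> 'z) measure"
  assumes convex: "\<And>yy. convex_on UNIV (\<lambda>p. loss p yy)"
    and T_pos: "T > 0"
    and m_pos: "\<And>t. t \<in> {1..T} \<Longrightarrow> m t > 0"
    and prior: "prob_space \<pi>1" "sets \<pi>1 = sets G"
    and eta_pos: "\<eta> > 0"
    and meas_pred: "\<And>t i. t \<in> {1..T} \<Longrightarrow> i \<in> {1..m t} \<Longrightarrow>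
                      (\<lambda>g. within_pred alg x y g t i) \<in> borel_measurable G"
    and int_pred: "\<And>t i. t \<in> {1..T} \<Longrightarrow> i \<in> {1..m t} \<Longrightarrow>
                      integrable \<pi>1 (\<lambda>g. within_pred alg x y g t i)"
    and meas_L: "\<And>t. t \<in> {1..T} \<Longrightarrow> (\<lambda>g. Lhat loss alg x y m g t) \<in> borel_measurable G"
    and meas_best: "\<And>t. t \<in> {1..T} \<Longrightarrow> (\<lambda>g. best_in_H loss H x y m g t) \<in> borel_measurable G"
    and meas_beta: "\<And>t. t \<in> {1..T} \<Longrightarrow> (\<lambda>g. \<beta> g (m t)) \<in> borel_measurable G"
    and L_bounds: "\<And>t g. t \<in> {1..T} \<Longrightarrow> g \<in> space G \<Longrightarrow>
                      0 \<le> Lhat loss alg x y m g t \<and> Lhat loss alg x y m g t \<le> C"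
    and regret_bound: "\<And>t g. t \<in> {1..T} \<Longrightarrow> g \<in> space G \<Longrightarrow>
                      regret loss alg H x y m g t \<le> ereal (\<beta> g (m t))"
  shows "ereal ((1 / real T) * (\<Sum>t=1..T. (1 / real (m t)) *
            (\<Sum>i=1..m t. loss (ewa_ll_pred loss alg \<pi>1 \<eta> x y m t i) (y t i))))
         \<le> (INF \<rho>\<in>{\<rho>. prob_space \<rho> \<and> sets \<rho> = sets G}.
              enn2ereal (\<integral>\<^sup>+ g. e2ennreal
                  (ereal (1 / real T) * (\<Sum>t=1..T. best_in_H loss H x y m g t)
                   + ereal ((1 / real T) * (\<Sum>t=1..T. \<beta> g (m t)))) \<partial>\<rho>)
              + ereal (\<eta> * C\<^sup>2 / 8)
              + KL_div \<rho> \<pi>1 / ereal (\<eta> * real T))"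
proof -
  let ?L = "\<lambda>s g. Lhat loss alg x y m g s"
  have ewa: "exponential_weights \<pi>1 \<eta> C T ?L"
    using prior eta_pos meas_L L_bounds
    by (intro exponential_weights.intro exponential_weights_axioms.intro)
       (simp_all add: measurable_cong_sets[OF prior(2) refl] sets_eq_imp_space_eq[OF prior(2)])
  have "(\<Sum>t=1..T. (1 / real (m t)) *
            (\<Sum>i=1..m t. loss (ewa_ll_pred loss alg \<pi>1 \<eta> x y m t i) (y t i)))
        \<le> (\<Sum>t=1..T. \<integral>g. Lhat loss alg x y m g t \<partial>ewa_prior \<pi>1 \<eta> ?L t)"
    by (rule sum_mono) (rule ewa_ll_task_loss_le[OF ewa convex _ m_pos int_pred])
  then have mixture_le: "ereal ((1 / real T) * (\<Sum>t=1..T. (1 / real (m t)) *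
            (\<Sum>i=1..m t. loss (ewa_ll_pred loss alg \<pi>1 \<eta> x y m t i) (y t i))))
        \<le> ereal ((1 / real T) * (\<Sum>t=1..T. \<integral>g. Lhat loss alg x y m g t \<partial>ewa_prior \<pi>1 \<eta> ?L t))"
    by (rule ereal_less_eq(3)[THEN iffD2, OF mult_left_mono]) simp
  show ?thesis
  proof (rule order_trans[OF mixture_le], intro INF_greatest
      exponential_weights.average_posterior_loss_le[OF ewa T_pos] average_Lhat_le_comparator)
    fix \<rho> assume "\<rho> \<in> {\<rho>. prob_space \<rho> \<and> sets \<rho> = sets G}"
    then show "prob_space \<rho>" "sets \<rho> = sets \<pi>1" using prior(2) by auto
  next
    fix g t assume "g \<in> space \<pi>1" "t \<in> {1..T}"
    then show "regret loss alg H x y m g t \<le> ereal (\<beta> g (m t))"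
      using regret_bound sets_eq_imp_space_eq[OF prior(2)] by blast
  qed
qed

end
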